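(* Let $n\ge 2k\ge 2$. The Kneser graph $K(n,k)$ admits perfect state transfer if and only if $n=2k$.
   Context: The Kneser graph $K(n,k)$ has as vertices the $k$-subsets of $\{1,\ldots,n\}$, two being adjacent iff they are disjoint. For a simple graph $X$ with adjacency matrix $A$, let $\mathcal{H}_X(t)=e^{itA}$. $X$ admits perfect state transfer (PST) from a vertex $u$ to a vertex $v\neq u$ at time $\tau>0$ if $|\mathcal{H}_X(\tau)_{u,v}|=1$; $X$ admits PST if this happens for some $u\ne v$ and some $\tau>0$. *)

theory Defs
  imports "HOL-Analysis.Analysis"
begin

text \<open>A finite simple graph is given by a finite vertex set V and a symmetric,
irreflexive adjacency relation adj. Its adjacency matrix is indexed by V.\<close>

definition adj_matrix :: "('a \<Rightarrow> 'a \<Rightarrow> bool) \<Rightarrow> 'a \<Rightarrow> 'a \<Rightarrow> complex" where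
  "adj_matrix adj u v = (if adj u v then 1 else 0)"

fun adj_pow :: "'a set \<Rightarrow> ('a \<Rightarrow> 'a \<Rightarrow> bool) \<Rightarrow> nat \<Rightarrow> 'a \<Rightarrow> 'a \<Rightarrow> complex" where
  "adj_pow V adj 0 u v = (if u = v then 1 else 0)"
| "adj_pow V adj (Suc m) u v = (\<Sum>w\<in>V. adj_pow V adj m u w * adj_matrix adj w v)"

text \<open>The transition matrix H(t) = exp(i t A) = sum_m (i t)^m / m! * A^m, entrywise.\<close>
definition transition_matrix :: "'a set \<Rightarrow> ('a \<Rightarrow> 'a \<Rightarrow> bool) \<Rightarrow> real \<Rightarrow> 'a \<Rightarrow> 'a \<Rightarrow> complex" where
  "transition_matrix V adj t u v =
     (\<Sum>m. (\<i> * complex_of_real t) ^ m / of_nat (fact m) * adj_pow V adj m u v)"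

definition pst :: "'a set \<Rightarrow> ('a \<Rightarrow> 'a \<Rightarrow> bool) \<Rightarrow> 'a \<Rightarrow> 'a \<Rightarrow> real \<Rightarrow> bool" where
  "pst V adj u v \<tau> \<longleftrightarrow> u \<in> V \<and> v \<in> V \<and> u \<noteq> v \<and> \<tau> > 0 \<and>
      cmod (transition_matrix V adj \<tau> u v) = 1"

definition admits_pst :: "'a set \<Rightarrow> ('a \<Rightarrow> 'a \<Rightarrow> bool) \<Rightarrow> bool" where
  "admits_pst V adj \<longleftrightarrow> (\<exists>u v \<tau>. pst V adj u v \<tau>)"

definition kneser_vertices :: "nat \<Rightarrow> nat \<Rightarrow> nat set set" where
  "kneser_vertices n k = {S. S \<subseteq> {1..n} \<and> card S = k}"

definition kneser_adj :: "nat set \<Rightarrow> nat set \<Rightarrow> bool" where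
  "kneser_adj S T \<longleftrightarrow> S \<inter> T = {}"

end

theory Submission
  imports Defs
begin

text \<open>
  If n > 2k, then for distinct k-sets u, v there is a transposition \<sigma> of {1..n} fixing u
  but moving v. It induces an automorphism of K(n,k), which commutes with H(t); so if the
  (u, v) entry of H(\<tau>) has modulus 1, so has the (u, \<sigma> v) entry, impossible in a row of the
  unitary matrix H(\<tau>). If n = 2k, K(n,k) is the perfect matching S \<mapsto> complement of S, whose
  adjacency matrix satisfies A^2 = I; hence H(t) = cos t \<cdot> I + \<i> sin t \<cdot> A, giving perfect
  state transfer at time \<pi>/2.
\<close>

definition graph_automorphism :: "'a set \<Rightarrow> ('a \<Rightarrow> 'a \<Rightarrow> bool) \<Rightarrow> ('a \<Rightarrow> 'a) \<Rightarrow> bool" where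
  "graph_automorphism V adj \<phi> \<longleftrightarrow>
     bij_betw \<phi> V V \<and> (\<forall>x\<in>V. \<forall>y\<in>V. adj (\<phi> x) (\<phi> y) = adj x y)"

lemma adj_pow_add:
  assumes "finite V" "v \<in> V"
  shows "adj_pow V adj (m + l) u v = (\<Sum>w\<in>V. adj_pow V adj m u w * adj_pow V adj l w v)"
  using assms(2)
proof (induction l arbitrary: v)
  case 0
  have "(\<Sum>w\<in>V. adj_pow V adj m u w * adj_pow V adj 0 w v) =
        (\<Sum>w\<in>V. if w = v then adj_pow V adj m u w else 0)"
    by (rule sum.cong) auto
  then show ?case using 0 assms(1) by simp
next
  case (Suc l)
  have "adj_pow V adj (m + Suc l) u v =
        (\<Sum>x\<in>V. (\<Sum>w\<in>V. adj_pow V adj m u w * adj_pow V adj l w x) * adj_matrix adj x v)"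
    using Suc.IH by (simp cong: sum.cong)
  also have "\<dots> = (\<Sum>w\<in>V. \<Sum>x\<in>V. adj_pow V adj m u w * (adj_pow V adj l w x * adj_matrix adj x v))"
    by (subst sum.swap) (simp add: sum_distrib_right mult.assoc)
  also have "\<dots> = (\<Sum>w\<in>V. adj_pow V adj m u w * adj_pow V adj (Suc l) w v)"
    by (simp add: sum_distrib_left)
  finally show ?case .
qed

lemma adj_pow_1:
  assumes "finite V" "u \<in> V"
  shows "adj_pow V adj 1 u v = adj_matrix adj u v"
proof -
  have "adj_pow V adj 1 u v = (\<Sum>w\<in>V. if w = u then adj_matrix adj w v else 0)"
    by (simp, intro sum.cong) auto
  then show ?thesis using assms by simp
qed

lemma cnj_adj_pow: "cnj (adj_pow V adj m u v) = adj_pow V adj m u v"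
  by (induction m arbitrary: v) (auto simp: adj_matrix_def intro: sum.cong)

lemma adj_pow_commute:
  assumes "finite V" "\<And>x y. adj x y = adj y x" "u \<in> V" "v \<in> V"
  shows "adj_pow V adj m u v = adj_pow V adj m v u"
  using assms(3,4)
proof (induction m arbitrary: u v)
  case 0
  then show ?case by simp
next
  case (Suc m)
  have "adj_pow V adj (Suc m) v u = (\<Sum>w\<in>V. adj_pow V adj 1 v w * adj_pow V adj m w u)"
    using adj_pow_add[OF assms(1) Suc.prems(1), of adj 1 m v] by simp
  also have "\<dots> = (\<Sum>w\<in>V. adj_matrix adj v w * adj_pow V adj m w u)"
    using Suc.prems assms(1) by (simp only: adj_pow_1)
  also have "\<dots> = (\<Sum>w\<in>V. adj_pow V adj m u w * adj_matrix adj w v)"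
    using Suc assms(2) by (intro sum.cong) (auto simp: adj_matrix_def)
  finally show ?case by simp
qed

lemma norm_adj_pow_le: "norm (adj_pow V adj m u v) \<le> real (card V) ^ m"
proof (induction m arbitrary: v)
  case 0
  then show ?case by simp
next
  case (Suc m)
  have "norm (adj_pow V adj (Suc m) u v) \<le> (\<Sum>w\<in>V. norm (adj_pow V adj m u w * adj_matrix adj w v))"
    by (simp add: norm_sum)
  also have "\<dots> \<le> (\<Sum>w\<in>V. real (card V) ^ m)"
    using Suc.IH by (intro sum_mono) (auto simp: adj_matrix_def)
  finally show ?case by simp
qed

lemma adj_pow_automorphism:
  assumes "graph_automorphism V adj \<phi>" "u \<in> V" "v \<in> V"
  shows "adj_pow V adj m (\<phi> u) (\<phi> v) = adj_pow V adj m u v"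
  using assms(3)
proof (induction m arbitrary: v)
  case 0
  then show ?case
    using assms(1,2) by (auto simp: graph_automorphism_def bij_betw_def dest: inj_onD)
next
  case (Suc m)
  have bij: "bij_betw \<phi> V V" and hom: "\<And>x y. x \<in> V \<Longrightarrow> y \<in> V \<Longrightarrow> adj (\<phi> x) (\<phi> y) = adj x y"
    using assms(1) by (auto simp: graph_automorphism_def)
  have "adj_pow V adj (Suc m) (\<phi> u) (\<phi> v) =
        (\<Sum>w\<in>V. adj_pow V adj m (\<phi> u) (\<phi> w) * adj_matrix adj (\<phi> w) (\<phi> v))"
    unfolding adj_pow.simps by (rule sum.reindex_bij_betw[OF bij, symmetric])
  also have "\<dots> = adj_pow V adj (Suc m) u v"
    using Suc hom by (simp add: adj_matrix_def cong: sum.cong)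
  finally show ?case .
qed

definition transition_term :: "'a set \<Rightarrow> ('a \<Rightarrow> 'a \<Rightarrow> bool) \<Rightarrow> real \<Rightarrow> 'a \<Rightarrow> 'a \<Rightarrow> nat \<Rightarrow> complex" where
  "transition_term V adj t u v m = (\<i> * of_real t) ^ m /\<^sub>R fact m * adj_pow V adj m u v"

lemma summable_norm_transition_term: "summable (\<lambda>m. norm (transition_term V adj t u v m))"
proof (rule summable_comparison_test')
  show "summable (\<lambda>m. inverse (fact m) * (\<bar>t\<bar> * real (card V)) ^ m)"
    by (rule summable_exp)
  fix m
  have "norm (transition_term V adj t u v m) = inverse (fact m) * \<bar>t\<bar> ^ m * norm (adj_pow V adj m u v)"
    by (simp add: transition_term_def norm_mult norm_power)
  also have "\<dots> \<le> inverse (fact m) * \<bar>t\<bar> ^ m * real (card V) ^ m"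
    by (intro mult_left_mono norm_adj_pow_le) auto
  finally show "norm (norm (transition_term V adj t u v m)) \<le> inverse (fact m) * (\<bar>t\<bar> * real (card V)) ^ m"
    by (simp add: power_mult_distrib mult.assoc)
qed

lemma transition_term_sums: "transition_term V adj t u v sums transition_matrix V adj t u v"
proof -
  have "transition_matrix V adj t u v = (\<Sum>m. transition_term V adj t u v m)"
    unfolding transition_matrix_def transition_term_def
    by (simp add: scaleR_conv_of_real divide_inverse mult.commute)
  then show ?thesis
    by (simp only: summable_sums[OF summable_norm_cancel[OF summable_norm_transition_term]])
qed

lemma transition_matrix_add:
  assumes "finite V" "v \<in> V"
  shows "transition_matrix V adj (t + s) u v =
         (\<Sum>w\<in>V. transition_matrix V adj t u w * transition_matrix V adj s w v)"
proof -
  let ?T = "transition_term V adj" and ?S = "\<lambda>x n. x ^ n /\<^sub>R fact n :: complex"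
  have "(\<lambda>k. \<Sum>w\<in>V. \<Sum>i\<le>k. ?T t u w i * ?T s w v (k - i)) sums
        (\<Sum>w\<in>V. transition_matrix V adj t u w * transition_matrix V adj s w v)"
  proof (rule sums_sum)
    fix w
    show "(\<lambda>k. \<Sum>i\<le>k. ?T t u w i * ?T s w v (k - i)) sums
          (transition_matrix V adj t u w * transition_matrix V adj s w v)"
      using Cauchy_product_sums[OF summable_norm_transition_term summable_norm_transition_term]
      by (simp only: sums_unique[OF transition_term_sums, symmetric])
  qed
  moreover have "(\<Sum>w\<in>V. \<Sum>i\<le>k. ?T t u w i * ?T s w v (k - i)) = ?T (t + s) u v k" for k
  proof -
    have split: "(\<Sum>w\<in>V. adj_pow V adj i u w * adj_pow V adj (k - i) w v) = adj_pow V adj k u v"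
      if "i \<le> k" for i
      using adj_pow_add[OF assms, of adj i "k - i" u] that by simp
    have "(\<Sum>w\<in>V. \<Sum>i\<le>k. ?T t u w i * ?T s w v (k - i)) =
          (\<Sum>i\<le>k. ?S (\<i> * of_real t) i * ?S (\<i> * of_real s) (k - i) *
             (\<Sum>w\<in>V. adj_pow V adj i u w * adj_pow V adj (k - i) w v))"
      unfolding transition_term_def sum_distrib_left
      by (subst sum.swap) (simp only: mult_ac)
    also have "\<dots> = (\<Sum>i\<le>k. ?S (\<i> * of_real t) i * ?S (\<i> * of_real s) (k - i)) * adj_pow V adj k u v"
      unfolding sum_distrib_right by (intro sum.cong refl) (simp add: split)
    also have "\<dots> = ?S (\<i> * of_real t + \<i> * of_real s) k * adj_pow V adj k u v"
      by (subst exp_series_add_commuting) (simp_all only: mult.commute)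
    also have "\<dots> = ?T (t + s) u v k"
      by (simp add: transition_term_def distrib_left)
    finally show ?thesis .
  qed
  ultimately have "?T (t + s) u v sums
                    (\<Sum>w\<in>V. transition_matrix V adj t u w * transition_matrix V adj s w v)"
    by simp
  then show ?thesis
    by (rule sums_unique2[OF transition_term_sums])
qed

lemma transition_matrix_0: "transition_matrix V adj 0 u v = (if u = v then 1 else 0)"
proof -
  have "transition_matrix V adj 0 u v =
        (\<Sum>m\<in>{0}. (\<i> * complex_of_real 0) ^ m / of_nat (fact m) * adj_pow V adj m u v)"
    unfolding transition_matrix_def by (rule suminf_finite) auto
  then show ?thesis by simp
qed

lemma cnj_transition_matrix: "cnj (transition_matrix V adj t u v) = transition_matrix V adj (- t) u v"
proof -
  have "(\<lambda>m. cnj (transition_term V adj t u v m)) sums cnj (transition_matrix V adj t u v)"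
    using transition_term_sums by (subst sums_cnj)
  moreover have "cnj (transition_term V adj t u v m) = transition_term V adj (- t) u v m" for m
    by (simp add: transition_term_def cnj_adj_pow)
  ultimately have "transition_term V adj (- t) u v sums cnj (transition_matrix V adj t u v)"
    by simp
  then show ?thesis
    by (rule sums_unique2[OF _ transition_term_sums])
qed

lemma transition_matrix_commute:
  assumes "finite V" "\<And>x y. adj x y = adj y x" "u \<in> V" "v \<in> V"
  shows "transition_matrix V adj t u v = transition_matrix V adj t v u"
  unfolding transition_matrix_def using adj_pow_commute[OF assms] by simp

text \<open>H(t) H(-t) = H(0) = I, and H(-t) is the conjugate transpose of H(t) since A is real
  and symmetric.\<close>
lemma transition_matrix_row_norm:
  assumes "finite V" "\<And>x y. adj x y = adj y x" "u \<in> V"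
  shows "(\<Sum>w\<in>V. (cmod (transition_matrix V adj t u w))\<^sup>2) = 1"
proof -
  have "(\<Sum>w\<in>V. transition_matrix V adj t u w * cnj (transition_matrix V adj t u w)) =
        (\<Sum>w\<in>V. transition_matrix V adj t u w * transition_matrix V adj (- t) w u)"
  proof (rule sum.cong[OF refl])
    fix w assume "w \<in> V"
    then have "transition_matrix V adj (- t) u w = transition_matrix V adj (- t) w u"
      using assms by (intro transition_matrix_commute)
    then show "transition_matrix V adj t u w * cnj (transition_matrix V adj t u w) =
               transition_matrix V adj t u w * transition_matrix V adj (- t) w u"
      by (simp only: cnj_transition_matrix)
  qed
  also have "\<dots> = 1"
    using transition_matrix_add[OF assms(1,3), of adj t "- t" u] by (simp add: transition_matrix_0)
  finally have "complex_of_real (\<Sum>w\<in>V. (cmod (transition_matrix V adj t u w))\<^sup>2) = 1"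
    by (simp only: of_real_sum complex_norm_square)
  then show ?thesis
    by (simp only: of_real_eq_1_iff)
qed

lemma transition_matrix_automorphism:
  assumes "graph_automorphism V adj \<phi>" "u \<in> V" "v \<in> V"
  shows "transition_matrix V adj t (\<phi> u) (\<phi> v) = transition_matrix V adj t u v"
  unfolding transition_matrix_def using adj_pow_automorphism[OF assms] by simp

lemma pst_automorphism_fixes:
  assumes "finite V" "\<And>x y. adj x y = adj y x" "pst V adj u v \<tau>"
    and "graph_automorphism V adj \<phi>" "\<phi> u = u"
  shows "\<phi> v = v"
proof (rule ccontr)
  assume moved: "\<phi> v \<noteq> v"
  have uV: "u \<in> V" and vV: "v \<in> V" and one: "cmod (transition_matrix V adj \<tau> u v) = 1"
    using assms(3) by (auto simp: pst_def)
  have \<phi>vV: "\<phi> v \<in> V"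
    using assms(4) vV by (auto simp: graph_automorphism_def bij_betw_def)
  have "cmod (transition_matrix V adj \<tau> u (\<phi> v)) = 1"
    using transition_matrix_automorphism[OF assms(4) uV vV] assms(5) one by simp
  then have "2 \<le> (\<Sum>w\<in>{v, \<phi> v}. (cmod (transition_matrix V adj \<tau> u w))\<^sup>2)"
    using one moved by simp
  also have "\<dots> \<le> (\<Sum>w\<in>V. (cmod (transition_matrix V adj \<tau> u w))\<^sup>2)"
    using vV \<phi>vV assms(1) by (intro sum_mono2) auto
  also have "\<dots> = 1"
    by (rule transition_matrix_row_norm[OF assms(1,2) uV])
  finally show False by simp
qed

lemma adj_pow_matching:
  assumes "finite V"
    and C: "\<And>v. v \<in> V \<Longrightarrow> C v \<in> V" "\<And>v. v \<in> V \<Longrightarrow> C (C v) = v"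
    and matching: "\<And>w v. w \<in> V \<Longrightarrow> v \<in> V \<Longrightarrow> adj w v \<longleftrightarrow> w = C v"
    and "v \<in> V"
  shows "adj_pow V adj m u v =
         (if even m then (if u = v then 1 else 0) else (if u = C v then 1 else 0))"
  using assms(5)
proof (induction m arbitrary: v)
  case 0
  then show ?case by simp
next
  case (Suc m)
  have "adj_pow V adj (Suc m) u v = (\<Sum>w\<in>V. if w = C v then adj_pow V adj m u w else 0)"
    using matching Suc.prems by (auto simp: adj_matrix_def intro: sum.cong)
  also have "\<dots> = adj_pow V adj m u (C v)"
    using C Suc.prems assms(1) by simp
  finally show ?case
    using Suc.IH[OF C(1)[OF Suc.prems]] C(2)[OF Suc.prems] by auto
qed

lemma transition_matrix_matching:
  assumes "finite V"
    and C: "\<And>v. v \<in> V \<Longrightarrow> C v \<in> V" "\<And>v. v \<in> V \<Longrightarrow> C (C v) = v"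
    and "\<And>w v. w \<in> V \<Longrightarrow> v \<in> V \<Longrightarrow> adj w v \<longleftrightarrow> w = C v"
    and "u \<in> V" "C u \<noteq> u"
  shows "transition_matrix V adj t u (C u) = \<i> * of_real (sin t)"
proof -
  have "transition_term V adj t u (C u) m = \<i> * of_real (sin_coeff m *\<^sub>R t ^ m)" for m
  proof (cases "even m")
    case True
    then show ?thesis
      using adj_pow_matching[OF assms(1-4) C(1)[OF \<open>u \<in> V\<close>]] assms(6)
      by (simp add: transition_term_def sin_coeff_def)
  next
    case False
    then obtain j where m: "m = Suc (2 * j)"
      by (metis oddE Suc_eq_plus1)
    have "adj_pow V adj m u (C u) = 1"
      using adj_pow_matching[OF assms(1-4) C(1)[OF \<open>u \<in> V\<close>]] C(2)[OF \<open>u \<in> V\<close>] False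
      by simp
    moreover have "(\<i> * of_real t) ^ m = \<i> * (- 1) ^ j * of_real t ^ m"
    proof -
      have "\<i> ^ m = \<i> * (- 1) ^ j"
        by (simp add: m power_mult)
      then show ?thesis
        by (simp only: power_mult_distrib)
    qed
    moreover have "sin_coeff m = (- 1) ^ j / fact m"
      by (simp add: sin_coeff_def m)
    ultimately show ?thesis
      by (simp add: transition_term_def scaleR_conv_of_real divide_inverse ac_simps)
  qed
  then have "transition_term V adj t u (C u) = (\<lambda>m. \<i> * of_real (sin_coeff m *\<^sub>R t ^ m))"
    by (rule ext)
  moreover have "(\<lambda>m. \<i> * of_real (sin_coeff m *\<^sub>R t ^ m)) sums (\<i> * of_real (sin t))"
    by (intro sums_mult sums_of_real sin_converges)
  ultimately have "transition_term V adj t u (C u) sums (\<i> * of_real (sin t))"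
    by (simp only:)
  then show ?thesis
    by (rule sums_unique2[OF transition_term_sums])
qed

lemma image_transposition_eq_iff:
  "id(a := b, b := a) ` S = S \<longleftrightarrow> (a \<in> S \<longleftrightarrow> b \<in> S)"
  by (auto simp: image_iff)

lemma finite_kneser_vertices: "finite (kneser_vertices n k)"
  by (rule finite_subset[of _ "Pow {1..n}"]) (auto simp: kneser_vertices_def)

lemma kneser_adj_commute: "kneser_adj S T = kneser_adj T S"
  by (auto simp: kneser_adj_def)

lemma kneser_transposition_automorphism:
  assumes "a \<in> {1..n}" "b \<in> {1..n}"
  shows "graph_automorphism (kneser_vertices n k) kneser_adj ((`) (id(a := b, b := a)))"
proof -
  define \<sigma> where "\<sigma> = id(a := b, b := a)"
  have inv: "\<sigma> ` \<sigma> ` S = S" for S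
    by (auto simp: \<sigma>_def image_image image_iff)
  have inj: "inj \<sigma>"
    by (rule injI) (auto simp: \<sigma>_def split: if_splits)
  have maps: "\<sigma> ` S \<in> kneser_vertices n k" if "S \<in> kneser_vertices n k" for S
  proof -
    have "card (\<sigma> ` S) = card S"
      by (rule card_image[OF inj_on_subset[OF inj subset_UNIV]])
    moreover have "\<sigma> ` S \<subseteq> {1..n}"
      using that assms by (auto simp: \<sigma>_def kneser_vertices_def)
    ultimately show ?thesis
      using that by (simp add: kneser_vertices_def)
  qed
  have "graph_automorphism (kneser_vertices n k) kneser_adj ((`) \<sigma>)"
    unfolding graph_automorphism_def kneser_adj_def
    using inv maps image_Int[OF inj, symmetric]
    by (auto intro!: bij_betw_byWitness[where f' = "(`) \<sigma>"])
  then show ?thesis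
    by (simp only: \<sigma>_def)
qed

text \<open>If u and v meet, swap a point of u \<inter> v with one of u - v; if they are disjoint,
  swap a point of v with one outside u \<union> v, which exists because n > 2k.\<close>
lemma kneser_separating_transposition:
  assumes "2 * k < n" "u \<in> kneser_vertices n k" "v \<in> kneser_vertices n k" "u \<noteq> v"
  obtains a b where "a \<in> {1..n}" "b \<in> {1..n}"
    "id(a := b, b := a) ` u = u" "id(a := b, b := a) ` v \<noteq> v"
proof -
  have u: "u \<subseteq> {1..n}" "card u = k" "finite u" and v: "v \<subseteq> {1..n}" "card v = k" "finite v"
    using assms(2,3) finite_subset by (auto simp: kneser_vertices_def)
  obtain a b where ab: "a \<in> {1..n}" "b \<in> {1..n}" "a \<in> v" "b \<notin> v" "a \<in> u \<longleftrightarrow> b \<in> u"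
  proof (cases "u \<inter> v = {}")
    case False
    obtain b where "b \<in> u" "b \<notin> v"
      using card_subset_eq[OF v(3), of u] u v assms(4) by auto
    moreover obtain a where "a \<in> u" "a \<in> v"
      using False by auto
    ultimately show ?thesis
      using that u(1) by blast
  next
    case True
    have "card (u \<union> v) = 2 * k"
      using card_Un_disjoint[OF u(3) v(3) True] u v by simp
    then have "card ({1..n} - (u \<union> v)) > 0"
      using assms(1) u(1) v(1) by (simp add: card_Diff_subset u(3) v(3))
    then obtain b where "b \<in> {1..n}" "b \<notin> u" "b \<notin> v"
      by (metis Diff_iff UnCI card_gt_0_iff ex_in_conv)
    moreover obtain a where "a \<in> v"
      using u v assms(4) by (metis card_0_eq ex_in_conv)
    ultimately show ?thesis
      using that v(1) True by blast
  qed
  then show ?thesis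
    using that image_transposition_eq_iff by metis
qed

lemma kneser_no_pst:
  assumes "2 * k < n"
  shows "\<not> admits_pst (kneser_vertices n k) kneser_adj"
proof
  assume "admits_pst (kneser_vertices n k) kneser_adj"
  then obtain u v \<tau> where pst: "pst (kneser_vertices n k) kneser_adj u v \<tau>"
    by (auto simp: admits_pst_def)
  then have "u \<in> kneser_vertices n k" "v \<in> kneser_vertices n k" "u \<noteq> v"
    by (auto simp: pst_def)
  then obtain a b where "a \<in> {1..n}" "b \<in> {1..n}"
    and fixes_u: "id(a := b, b := a) ` u = u" and moves_v: "id(a := b, b := a) ` v \<noteq> v"
    by (rule kneser_separating_transposition[OF assms])
  then have "graph_automorphism (kneser_vertices n k) kneser_adj ((`) (id(a := b, b := a)))"
    by (intro kneser_transposition_automorphism)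
  then show False
    using pst_automorphism_fixes[OF finite_kneser_vertices kneser_adj_commute pst] fixes_u moves_v
    by blast
qed

lemma kneser_pst_complement:
  assumes "k \<ge> 1"
  shows "pst (kneser_vertices (2 * k) k) kneser_adj {1..k} ({1..2 * k} - {1..k}) (pi / 2)"
proof -
  let ?V = "kneser_vertices (2 * k) k" and ?C = "\<lambda>S. {1..2 * k} - S"
  have C: "?C S \<in> ?V" "?C (?C S) = S" if "S \<in> ?V" for S
    using that finite_subset[of S "{1..2*k}"]
    by (auto simp: kneser_vertices_def card_Diff_subset)
  have adj: "kneser_adj W S \<longleftrightarrow> W = ?C S" if "W \<in> ?V" "S \<in> ?V" for W S
  proof
    assume "kneser_adj W S"
    then have "W \<subseteq> ?C S"
      using that by (auto simp: kneser_adj_def kneser_vertices_def)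
    moreover have "card W = card (?C S)"
      using that C(1)[OF that(2)] by (simp add: kneser_vertices_def)
    ultimately show "W = ?C S"
      by (intro card_subset_eq) auto
  qed (auto simp: kneser_adj_def)
  have u: "{1..k} \<in> ?V" and moved: "?C {1..k} \<noteq> {1..k}"
    using assms by (auto simp: kneser_vertices_def)
  show ?thesis
    using transition_matrix_matching[OF finite_kneser_vertices C adj u moved, of "pi / 2"]
      u C(1)[OF u] moved
    by (auto simp: pst_def)
qed

theorem mainTheorem3:
  fixes n k :: nat
  assumes "n \<ge> 2 * k" and "2 * k \<ge> 2"
  shows "admits_pst (kneser_vertices n k) kneser_adj \<longleftrightarrow> n = 2 * k"
proof
  assume "admits_pst (kneser_vertices n k) kneser_adj"
  then show "n = 2 * k"
    using kneser_no_pst assms(1) le_neq_implies_less by blast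
next
  assume "n = 2 * k"
  then show "admits_pst (kneser_vertices n k) kneser_adj"
    using kneser_pst_complement assms(2) by (auto simp: admits_pst_def)
qed

end
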